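(* In the setting described in the context, for arbitrary but fixed $\tilde u\in U_h^{(2)}$ and $\tilde z\in V_h^{(2)}$, the error representation $$J(u_h^{(2)})-J(\tilde u)=\tfrac12\rho(\tilde u)(z_h^{(2)}-\tilde z)+\tfrac12\rho^*(\tilde u,\tilde z)(u_h^{(2)}-\tilde u)+\rho(\tilde u)(\tilde z)+\mathcal{R}^{(3)(2)}$$ holds.
   Context: Let $U$ and $V$ be real Banach spaces with dual $V^*$. Let $\mathcal{A}:U\to V^*$ be a (nonlinear) operator that is three times continuously Fréchet differentiable, and let $J:U\to\mathbb{R}$ be three times continuously Fréchet differentiable. Notation: $\mathcal{A}(w)(v)$ is the value of $\mathcal{A}(w)\in V^*$ at $v\in V$. For fixed $v$, $\mathcal{A}'(w)(\varphi,v)$, $\mathcal{A}''(w)(\varphi,\psi,v)$ and $\mathcal{A}'''(w)(\varphi,\psi,\chi,v)$ denote the first, second and third Fréchet derivatives of $w\mapsto\mathcal{A}(w)(v)$ at $w$ in the directions $\varphi,\psi,\chi\in U$. Analogously, $J'(w)(\varphi)$ and $J'''(w)(\varphi,\psi,\chi)$ denote derivatives of $J$. Let $U_h^{(2)}\subset U$ and $V_h^{(2)}\subset V$ be finite-dimensional subspaces. Let $u_h^{(2)}\in U_h^{(2)}$ satisfy $\mathcal{A}(u_h^{(2)})(v)=0$ for all $v\in V_h^{(2)}$. Let $z_h^{(2)}\in V_h^{(2)}$ satisfy $\mathcal{A}'(u_h^{(2)})(\varphi,z_h^{(2)})=J'(u_h^{(2)})(\varphi)$ for all $\varphi\in U_h^{(2)}$.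 Define $\rho(\tilde u)(v):=-\mathcal{A}(\tilde u)(v)$ and $\rho^*(\tilde u,\tilde z)(\varphi):=J'(\tilde u)(\varphi)-\mathcal{A}'(\tilde u)(\varphi,\tilde z)$. With $e^{(2)}:=u_h^{(2)}-\tilde u$ and $e^{(2),*}:=z_h^{(2)}-\tilde z$, define $$\mathcal{R}^{(3)(2)}:=\frac12\int_0^1\Big[J'''(\tilde u+se^{(2)})(e^{(2)},e^{(2)},e^{(2)})-\mathcal{A}'''(\tilde u+se^{(2)})(e^{(2)},e^{(2)},e^{(2)},\tilde z+se^{(2),*})-3\mathcal{A}''(\tilde u+se^{(2)})(e^{(2)},e^{(2)},e^{(2),*})\Big]s(s-1)\,ds.$$ *)

theory Defs
  imports "HOL-Analysis.Analysis"
begin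

definition fin_dim_subspace :: "'a::real_vector set \<Rightarrow> bool" where
  "fin_dim_subspace S \<longleftrightarrow> subspace S \<and> (\<exists>B. finite B \<and> span B = S)"

end

theory Submission
  imports Defs
begin

text \<open>Consider the Lagrangian \<open>L(u, z) = J u - A u z\<close> along the segment from \<open>(ut, zt)\<close> to
  \<open>(uh, zh)\<close>, i.e. \<open>g s = L(ut + s e, zt + s es)\<close>. The trapezoidal rule with its
  Peano-kernel remainder gives \<open>g 1 - g 0 = (g' 0 + g' 1)/2 + 1/2 \<integral> g''' s s(s - 1) ds\<close>.
  The Galerkin equations for \<open>uh\<close> and \<open>zh\<close>, tested with \<open>zh\<close>, \<open>es \<in> Vh\<close> and \<open>e \<in> Uh\<close>,
  give \<open>g 1 = J uh\<close> and \<open>g' 1 = 0\<close>, while \<open>g 0 = J ut - \<rho>(ut)(zt)\<close> and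
  \<open>g' 0 = \<rho>(ut)(es) + \<rho>*(ut, zt)(e)\<close>.\<close>

lemma has_vector_derivative_along_line:
  fixes F :: "'a::real_normed_vector \<Rightarrow> 'b::real_normed_vector"
  assumes "\<And>w. (F has_derivative blinfun_apply (F' w)) (at w)"
  shows "((\<lambda>s. F (u + s *\<^sub>R e)) has_vector_derivative F' (u + s *\<^sub>R e) e) (at s)"
proof -
  have "((\<lambda>s. u + s *\<^sub>R e) has_derivative (\<lambda>h. h *\<^sub>R e)) (at s)"
    by (auto intro!: derivative_eq_intros)
  from has_derivative_compose[OF this assms]
  have "((\<lambda>s. F (u + s *\<^sub>R e)) has_derivative (\<lambda>h. F' (u + s *\<^sub>R e) (h *\<^sub>R e))) (at s)"
    by (simp add: o_def)
  then show ?thesis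
    unfolding has_vector_derivative_def by (simp add: blinfun.scaleR_right)
qed

lemma has_vector_derivative_blinfun_apply:
  assumes "(X has_vector_derivative X') (at s)" and "(Y has_vector_derivative Y') (at s)"
  shows "((\<lambda>s. blinfun_apply (X s) (Y s)) has_vector_derivative X' (Y s) + X s Y') (at s)"
  using bounded_bilinear.has_vector_derivative[OF bounded_bilinear_blinfun_apply assms]
  by (simp add: add.commute)

lemma has_vector_derivative_blinfun_apply_const:
  assumes "(X has_vector_derivative X') (at s)"
  shows "((\<lambda>s. blinfun_apply (X s) c) has_vector_derivative X' c) (at s)"
  using has_vector_derivative_blinfun_apply[OF assms has_vector_derivative_const[of c]]
  by simp

text \<open>No continuity of \<open>g'''\<close> is needed, since the Henstock-Kurzweil fundamental
  theorem of calculus applies to every derivative.\<close>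

lemma trapezoidal_rule_remainder:
  fixes g g' g'' g''' :: "real \<Rightarrow> real"
  assumes "a \<le> b"
    and d1: "\<And>s. s \<in> {a..b} \<Longrightarrow> (g has_real_derivative g' s) (at s within {a..b})"
    and d2: "\<And>s. s \<in> {a..b} \<Longrightarrow> (g' has_real_derivative g'' s) (at s within {a..b})"
    and d3: "\<And>s. s \<in> {a..b} \<Longrightarrow> (g'' has_real_derivative g''' s) (at s within {a..b})"
  shows "g b - g a = (b - a) / 2 * (g' a + g' b)
           + 1/2 * integral {a..b} (\<lambda>s. g''' s * ((s - a) * (s - b)))"
proof -
  define F where "F s = g'' s * ((s - a) * (s - b)) - g' s * (2 * s - a - b) + 2 * g s" for s
  have "(F has_real_derivative g''' s * ((s - a) * (s - b))) (at s within {a..b})"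
    if "s \<in> {a..b}" for s
  proof -
    have "(F has_real_derivative g''' s * ((s - a) * (s - b)) + g'' s * ((s - a) + (s - b))
            - (g'' s * (2 * s - a - b) + g' s * 2) + 2 * g' s) (at s within {a..b})"
      unfolding F_def using d1 d2 d3 that by (auto intro!: derivative_eq_intros)
    then show ?thesis by (simp add: algebra_simps)
  qed
  then have "((\<lambda>s. g''' s * ((s - a) * (s - b))) has_integral F b - F a) {a..b}"
    using \<open>a \<le> b\<close>
    by (intro fundamental_theorem_of_calculus)
      (simp_all add: has_real_derivative_iff_has_vector_derivative)
  then have "integral {a..b} (\<lambda>s. g''' s * ((s - a) * (s - b))) = F b - F a"
    by (rule integral_unique)
  then show ?thesis
    by (simp add: F_def field_simps)
qed

lemma lagrangian_trapezoidal_representation: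
  fixes A :: "'u::real_normed_vector \<Rightarrow> ('v::real_normed_vector \<Rightarrow>\<^sub>L real)"
    and A1 :: "'u \<Rightarrow> ('u \<Rightarrow>\<^sub>L ('v \<Rightarrow>\<^sub>L real))"
    and A2 :: "'u \<Rightarrow> ('u \<Rightarrow>\<^sub>L ('u \<Rightarrow>\<^sub>L ('v \<Rightarrow>\<^sub>L real)))"
    and A3 :: "'u \<Rightarrow> ('u \<Rightarrow>\<^sub>L ('u \<Rightarrow>\<^sub>L ('u \<Rightarrow>\<^sub>L ('v \<Rightarrow>\<^sub>L real))))"
    and J :: "'u \<Rightarrow> real"
    and J1 :: "'u \<Rightarrow> ('u \<Rightarrow>\<^sub>L real)"
    and J2 :: "'u \<Rightarrow> ('u \<Rightarrow>\<^sub>L ('u \<Rightarrow>\<^sub>L real))"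
    and J3 :: "'u \<Rightarrow> ('u \<Rightarrow>\<^sub>L ('u \<Rightarrow>\<^sub>L ('u \<Rightarrow>\<^sub>L real)))"
    and ua ub :: 'u and za zb :: 'v
  assumes dA: "\<And>w. (A has_derivative blinfun_apply (A1 w)) (at w)"
    and dA1: "\<And>w. (A1 has_derivative blinfun_apply (A2 w)) (at w)"
    and dA2: "\<And>w. (A2 has_derivative blinfun_apply (A3 w)) (at w)"
    and dJ: "\<And>w. (J has_derivative blinfun_apply (J1 w)) (at w)"
    and dJ1: "\<And>w. (J1 has_derivative blinfun_apply (J2 w)) (at w)"
    and dJ2: "\<And>w. (J2 has_derivative blinfun_apply (J3 w)) (at w)"
  defines "e \<equiv> ub - ua" and "es \<equiv> zb - za"
  shows "(J ub - A ub zb) - (J ua - A ua za)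
         = 1/2 * ((J1 ua e - A1 ua e za - A ua es) + (J1 ub e - A1 ub e zb - A ub es))
           + 1/2 * integral {0..1} (\<lambda>s.
               (J3 (ua + s *\<^sub>R e) e e e
                - A3 (ua + s *\<^sub>R e) e e e (za + s *\<^sub>R es)
                - 3 * A2 (ua + s *\<^sub>R e) e e es) * (s * (s - 1)))"
proof -
  define p where "p s = ua + s *\<^sub>R e" for s
  define q where "q s = za + s *\<^sub>R es" for s
  define g where "g s = J (p s) - A (p s) (q s)" for s
  define g' where "g' s = J1 (p s) e - (A1 (p s) e (q s) + A (p s) es)" for s
  define g'' where "g'' s = J2 (p s) e e - (A2 (p s) e e (q s) + A1 (p s) e es + A1 (p s) e es)"
    for s
  define g''' where "g''' s = J3 (p s) e e e
      - (A3 (p s) e e e (q s) + A2 (p s) e e es + A2 (p s) e e es + A2 (p s) e e es)" for s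
  note line = has_vector_derivative_along_line
  note appl = has_vector_derivative_blinfun_apply has_vector_derivative_blinfun_apply_const
  have dq: "(q has_vector_derivative es) (at s)" for s
    unfolding q_def by (auto intro!: derivative_eq_intros)
  have "(g has_vector_derivative g' s) (at s)" for s
    unfolding g_def g'_def p_def
    by (intro has_vector_derivative_diff line[OF dJ] appl(1)[OF line[OF dA] dq])
  moreover have "(g' has_vector_derivative g'' s) (at s)" for s
    unfolding g'_def g''_def p_def
    by (intro has_vector_derivative_diff has_vector_derivative_add appl(2) line[OF dJ1]
        appl(1)[OF appl(2)[OF line[OF dA1]] dq] line[OF dA])
  moreover have "(g'' has_vector_derivative g''' s) (at s)" for s
    unfolding g''_def g'''_def p_def
    by (intro has_vector_derivative_diff has_vector_derivative_add appl(2) line[OF dJ2]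
        appl(1)[OF appl(2)[OF appl(2)[OF line[OF dA2]]] dq] line[OF dA1])
  ultimately have
    "g 1 - g 0 = (g' 0 + g' 1) / 2 + 1/2 * integral {0..1} (\<lambda>s. g''' s * (s * (s - 1)))"
    using trapezoidal_rule_remainder[of 0 1 g g' g'' g''']
    by (simp add: has_real_derivative_iff_has_vector_derivative has_vector_derivative_at_within)
  moreover have "p 0 = ua" "p 1 = ub" "q 0 = za" "q 1 = zb"
    by (simp_all add: p_def q_def e_def es_def)
  ultimately show ?thesis
    by (simp add: g_def g'_def g'''_def p_def q_def field_simps)
qed

theorem mainTheorem5:
  fixes A :: "'u::banach \<Rightarrow> ('v::banach \<Rightarrow>\<^sub>L real)"
    and A1 :: "'u \<Rightarrow> ('u \<Rightarrow>\<^sub>L ('v \<Rightarrow>\<^sub>L real))"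
    and A2 :: "'u \<Rightarrow> ('u \<Rightarrow>\<^sub>L ('u \<Rightarrow>\<^sub>L ('v \<Rightarrow>\<^sub>L real)))"
    and A3 :: "'u \<Rightarrow> ('u \<Rightarrow>\<^sub>L ('u \<Rightarrow>\<^sub>L ('u \<Rightarrow>\<^sub>L ('v \<Rightarrow>\<^sub>L real))))"
    and J :: "'u \<Rightarrow> real"
    and J1 :: "'u \<Rightarrow> ('u \<Rightarrow>\<^sub>L real)"
    and J2 :: "'u \<Rightarrow> ('u \<Rightarrow>\<^sub>L ('u \<Rightarrow>\<^sub>L real))"
    and J3 :: "'u \<Rightarrow> ('u \<Rightarrow>\<^sub>L ('u \<Rightarrow>\<^sub>L ('u \<Rightarrow>\<^sub>L real)))"
    and Uh :: "'u set" and Vh :: "'v set"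
    and uh ut :: 'u and zh zt :: 'v
  assumes dA: "\<And>w. (A has_derivative blinfun_apply (A1 w)) (at w)"
    and dA1: "\<And>w. (A1 has_derivative blinfun_apply (A2 w)) (at w)"
    and dA2: "\<And>w. (A2 has_derivative blinfun_apply (A3 w)) (at w)"
    and cA3: "continuous_on UNIV A3"
    and dJ: "\<And>w. (J has_derivative blinfun_apply (J1 w)) (at w)"
    and dJ1: "\<And>w. (J1 has_derivative blinfun_apply (J2 w)) (at w)"
    and dJ2: "\<And>w. (J2 has_derivative blinfun_apply (J3 w)) (at w)"
    and cJ3: "continuous_on UNIV J3"
    and Uh: "fin_dim_subspace Uh" and Vh: "fin_dim_subspace Vh"
    and uh: "uh \<in> Uh" and uh_eq: "\<And>v. v \<in> Vh \<Longrightarrow> A uh v = 0"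
    and zh: "zh \<in> Vh" and zh_eq: "\<And>\<phi>. \<phi> \<in> Uh \<Longrightarrow> A1 uh \<phi> zh = J1 uh \<phi>"
    and ut: "ut \<in> Uh" and zt: "zt \<in> Vh"
  shows "(let e = uh - ut; es = zh - zt;
              rho = (\<lambda>v. - A ut v);
              rhos = (\<lambda>\<phi>. J1 ut \<phi> - A1 ut \<phi> zt);
              R = 1/2 * integral {0..1} (\<lambda>s.
                    (J3 (ut + s *\<^sub>R e) e e e
                     - A3 (ut + s *\<^sub>R e) e e e (zt + s *\<^sub>R es)
                     - 3 * A2 (ut + s *\<^sub>R e) e e es) * (s * (s - 1)))
          in J uh - J ut = 1/2 * rho es + 1/2 * rhos e + rho zt + R)"
proof -
  have "uh - ut \<in> Uh" "zh - zt \<in> Vh"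
    using Uh Vh uh ut zh zt by (simp_all add: fin_dim_subspace_def subspace_diff)
  then have "A uh zh = 0" "A uh (zh - zt) = 0" "A1 uh (uh - ut) zh = J1 uh (uh - ut)"
    using uh_eq zh_eq zh by simp_all
  moreover note lagrangian_trapezoidal_representation[OF dA dA1 dA2 dJ dJ1 dJ2,
      where ua = ut and ub = uh and za = zt and zb = zh]
  ultimately show ?thesis
    unfolding Let_def by argo
qed

end
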